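(* Let $\{M_i\mid i\in I\}$ be a collection of monoids. Then the monoid free product $F=\prod_1^{*}\{M_i\mid i\in I\}$ is finitely right equated if and only if each $M_i$ ($i\in I$) is finitely right equated.
   Context: For a semigroup $S$ and $a\in S$, $\mathbf{r}_S(a)=\{(s,t)\in S\times S\mid as=at\}$ is the right annihilator congruence of $a$. $S$ is finitely right equated (FRE) if each $\mathbf{r}_S(a)$ is finitely generated as a right congruence, i.e. equals the smallest right congruence containing some finite subset. For pairwise disjoint monoids $M_i$ with identities $1_i$, the monoid free product is the quotient of the semigroup free product $\prod^{*}\{M_i\}$ (sequences $s_1*\dots*s_n$ with $s_j\in\bigsqcup M_i$, consecutive entries from different factors, multiplied by concatenation and multiplying adjacent entries from the same factor) by the congruence generated by $\{(1_i,1_j)\mid i,j\in I\}$. *)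

theory Defs
  imports "HOL-Algebra.Group"
begin

definition right_congruence :: "'a set \<Rightarrow> ('a \<Rightarrow> 'a \<Rightarrow> 'a) \<Rightarrow> ('a \<times> 'a) set \<Rightarrow> bool" where
  "right_congruence S f \<rho> \<longleftrightarrow> equiv S \<rho> \<and>
     (\<forall>s t u. (s, t) \<in> \<rho> \<longrightarrow> u \<in> S \<longrightarrow> (f s u, f t u) \<in> \<rho>)"

definition right_cong_gen :: "'a set \<Rightarrow> ('a \<Rightarrow> 'a \<Rightarrow> 'a) \<Rightarrow> ('a \<times> 'a) set \<Rightarrow> ('a \<times> 'a) set" where
  "right_cong_gen S f X = \<Inter>{\<rho>. right_congruence S f \<rho> \<and> X \<subseteq> \<rho>}"

definition right_annihilator :: "'a set \<Rightarrow> ('a \<Rightarrow> 'a \<Rightarrow> 'a) \<Rightarrow> 'a \<Rightarrow> ('a \<times> 'a) set" where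
  "right_annihilator S f a = {(s, t). s \<in> S \<and> t \<in> S \<and> f a s = f a t}"

definition fin_right_equated :: "'a set \<Rightarrow> ('a \<Rightarrow> 'a \<Rightarrow> 'a) \<Rightarrow> bool" where
  "fin_right_equated S f \<longleftrightarrow>
     (\<forall>a \<in> S. \<exists>X. finite X \<and> X \<subseteq> S \<times> S \<and> right_cong_gen S f X = right_annihilator S f a)"

abbreviation FRE :: "('a, 'b) monoid_scheme \<Rightarrow> bool" where
  "FRE M \<equiv> fin_right_equated (carrier M) (mult M)"

text \<open>The factors are made pairwise disjoint by tagging each element with its index.
  An element of the semigroup free product is a nonempty word
  s_1 * ... * s_n, represented as a list of (index, element) pairs, with consecutive
  entries from different factors.\<close>

definition sg_free_prod_carrier :: "'i set \<Rightarrow> ('i \<Rightarrow> ('a, 'b) monoid_scheme) \<Rightarrow> ('i \<times> 'a) list set" where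
  "sg_free_prod_carrier I M =
     {w. w \<noteq> [] \<and> (\<forall>(i, a) \<in> set w. i \<in> I \<and> a \<in> carrier (M i)) \<and>
         (\<forall>k. Suc k < length w \<longrightarrow> fst (w ! k) \<noteq> fst (w ! Suc k))}"

definition sg_free_prod_mult :: "('i \<Rightarrow> ('a, 'b) monoid_scheme) \<Rightarrow> ('i \<times> 'a) list \<Rightarrow> ('i \<times> 'a) list \<Rightarrow> ('i \<times> 'a) list" where
  "sg_free_prod_mult M u v =
     (if fst (last u) = fst (hd v)
      then butlast u @ [(fst (last u), snd (last u) \<otimes>\<^bsub>M (fst (last u))\<^esub> snd (hd v))] @ tl v
      else u @ v)"

definition semigroup_congruence :: "'a set \<Rightarrow> ('a \<Rightarrow> 'a \<Rightarrow> 'a) \<Rightarrow> ('a \<times> 'a) set \<Rightarrow> bool" where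
  "semigroup_congruence S f \<theta> \<longleftrightarrow> equiv S \<theta> \<and>
     (\<forall>s t u. (s, t) \<in> \<theta> \<longrightarrow> u \<in> S \<longrightarrow> (f s u, f t u) \<in> \<theta> \<and> (f u s, f u t) \<in> \<theta>)"

definition cong_gen :: "'a set \<Rightarrow> ('a \<Rightarrow> 'a \<Rightarrow> 'a) \<Rightarrow> ('a \<times> 'a) set \<Rightarrow> ('a \<times> 'a) set" where
  "cong_gen S f X = \<Inter>{\<theta>. semigroup_congruence S f \<theta> \<and> X \<subseteq> \<theta>}"

definition free_prod_cong :: "'i set \<Rightarrow> ('i \<Rightarrow> ('a, 'b) monoid_scheme) \<Rightarrow> (('i \<times> 'a) list \<times> ('i \<times> 'a) list) set" where
  "free_prod_cong I M =
     cong_gen (sg_free_prod_carrier I M) (sg_free_prod_mult M)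
       {([(i, \<one>\<^bsub>M i\<^esub>)], [(j, \<one>\<^bsub>M j\<^esub>)]) | i j. i \<in> I \<and> j \<in> I}"

definition monoid_free_prod :: "'i set \<Rightarrow> ('i \<Rightarrow> ('a, 'b) monoid_scheme) \<Rightarrow> ('i \<times> 'a) list set monoid" where
  "monoid_free_prod I M =
     \<lparr> carrier = sg_free_prod_carrier I M // free_prod_cong I M,
       mult = (\<lambda>A B. free_prod_cong I M ``
                       {sg_free_prod_mult M (SOME u. u \<in> A) (SOME v. v \<in> B)}),
       one = free_prod_cong I M `` {[(SOME i. i \<in> I, \<one>\<^bsub>M (SOME i. i \<in> I)\<^esub>)]} \<rparr>"

end

theory Submission
  imports Defs
begin

text \<open>
  Reduced words, i.e. alternating sequences of non-identity letters, multiplied by concatenating and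
  reducing, form a monoid isomorphic to the monoid free product; so it suffices to study this normal form.
  Each factor M_i is a retract of it (one-letter words, and the projection multiplying the letters
  from M_i), and being finitely right equated passes to retracts.
  Conversely, the right annihilator of a reduced word p x whose last letter x lies in M_i is treated by
  induction on the length. If x has no right inverse in M_i, nothing multiplied on the right of p x
  reaches p, so r(p x) = r(x), which is generated by the one-letter images of generators of the
  annihilator of x in M_i. If x b = 1, then (s, t) \<in> r(p x) means (x s, x t) \<in> r(p), and
  s is congruent to b x s modulo r(x); hence generators of r(x) together with b times generators of r(p)
  generate r(p x).
\<close>

lemma right_congruenceI:
  assumes "\<rho> \<subseteq> S \<times> S" and "\<And>x. x \<in> S \<Longrightarrow> (x, x) \<in> \<rho>"
    and "\<And>x y. (x, y) \<in> \<rho> \<Longrightarrow> (y, x) \<in> \<rho>"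
    and "\<And>x y z. (x, y) \<in> \<rho> \<Longrightarrow> (y, z) \<in> \<rho> \<Longrightarrow> (x, z) \<in> \<rho>"
    and "\<And>x y u. (x, y) \<in> \<rho> \<Longrightarrow> u \<in> S \<Longrightarrow> (f x u, f y u) \<in> \<rho>"
  shows "right_congruence S f \<rho>"
  using assms unfolding right_congruence_def equiv_def refl_on_def sym_def trans_def by blast

lemma right_congruenceD:
  assumes "right_congruence S f \<rho>"
  shows "\<rho> \<subseteq> S \<times> S" and "x \<in> S \<Longrightarrow> (x, x) \<in> \<rho>" and "(x, y) \<in> \<rho> \<Longrightarrow> (y, x) \<in> \<rho>"
    and "(x, y) \<in> \<rho> \<Longrightarrow> (y, z) \<in> \<rho> \<Longrightarrow> (x, z) \<in> \<rho>"
    and "(x, y) \<in> \<rho> \<Longrightarrow> u \<in> S \<Longrightarrow> (f x u, f y u) \<in> \<rho>"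
  using assms unfolding right_congruence_def equiv_def refl_on_def sym_def trans_def by blast+

lemma right_congruence_Inter:
  assumes "\<F> \<noteq> {}" and \<F>: "\<And>\<rho>. \<rho> \<in> \<F> \<Longrightarrow> right_congruence S f \<rho>"
  shows "right_congruence S f (\<Inter>\<F>)"
proof (rule right_congruenceI)
  show "\<Inter>\<F> \<subseteq> S \<times> S"
    using assms(1) right_congruenceD(1)[OF \<F>] by blast
  show "(x, x) \<in> \<Inter>\<F>" if "x \<in> S" for x
    using that right_congruenceD(2)[OF \<F>] by blast
  show "(y, x) \<in> \<Inter>\<F>" if "(x, y) \<in> \<Inter>\<F>" for x y
    using that right_congruenceD(3)[OF \<F>] by blast
  show "(x, z) \<in> \<Inter>\<F>" if "(x, y) \<in> \<Inter>\<F>" and "(y, z) \<in> \<Inter>\<F>" for x y z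
    using that right_congruenceD(4)[OF \<F>] by blast
  show "(f x u, f y u) \<in> \<Inter>\<F>" if "(x, y) \<in> \<Inter>\<F>" and "u \<in> S" for x y u
    using that right_congruenceD(5)[OF \<F>] by blast
qed

lemma right_cong_gen_upper: "X \<subseteq> right_cong_gen S f X"
  unfolding right_cong_gen_def by blast

lemma right_cong_gen_least:
  "right_congruence S f \<rho> \<Longrightarrow> X \<subseteq> \<rho> \<Longrightarrow> right_cong_gen S f X \<subseteq> \<rho>"
  unfolding right_cong_gen_def by blast

lemma right_cong_gen_mono: "X \<subseteq> Y \<Longrightarrow> right_cong_gen S f X \<subseteq> right_cong_gen S f Y"
  unfolding right_cong_gen_def by blast

lemma right_congruence_right_cong_gen:
  assumes closed: "\<forall>x\<in>S. \<forall>y\<in>S. f x y \<in> S" and "X \<subseteq> S \<times> S"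
  shows "right_congruence S f (right_cong_gen S f X)"
  unfolding right_cong_gen_def
proof (rule right_congruence_Inter)
  have "right_congruence S f (S \<times> S)"
    using closed by (intro right_congruenceI) auto
  then show "{\<rho>. right_congruence S f \<rho> \<and> X \<subseteq> \<rho>} \<noteq> {}"
    using assms(2) by blast
qed blast

lemma right_cong_gen_empty:
  assumes "\<forall>x\<in>S. \<forall>y\<in>S. f x y \<in> S"
  shows "right_cong_gen S f {} = Id_on S"
proof
  have "right_congruence S f (Id_on S)"
    using assms by (intro right_congruenceI) auto
  then show "right_cong_gen S f {} \<subseteq> Id_on S"
    by (rule right_cong_gen_least) simp
  show "Id_on S \<subseteq> right_cong_gen S f {}"
    using right_congruenceD(2)[OF right_congruence_right_cong_gen[OF assms, of "{}"]] by auto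
qed

lemma right_congruence_right_annihilator:
  assumes closed: "\<forall>x\<in>S. \<forall>y\<in>S. f x y \<in> S"
    and assoc: "\<forall>x\<in>S. \<forall>y\<in>S. \<forall>z\<in>S. f (f x y) z = f x (f y z)" and "a \<in> S"
  shows "right_congruence S f (right_annihilator S f a)"
proof (rule right_congruenceI)
  fix x y u assume "(x, y) \<in> right_annihilator S f a" and u: "u \<in> S"
  then have "x \<in> S" "y \<in> S" "f a x = f a y"
    unfolding right_annihilator_def by auto
  then have "f a (f x u) = f a (f y u)"
    using assoc \<open>a \<in> S\<close> u by metis
  then show "(f x u, f y u) \<in> right_annihilator S f a"
    using closed \<open>x \<in> S\<close> \<open>y \<in> S\<close> u unfolding right_annihilator_def by auto
qed (auto simp: right_annihilator_def)

text \<open>The compatibility condition covers homomorphisms (k = h) as well as, by associativity,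
  left multiplications h = f b (k the identity).\<close>

lemma right_congruence_vimage:
  assumes \<rho>: "right_congruence T g \<rho>"
    and h: "\<forall>x\<in>S. h x \<in> T" and k: "\<forall>y\<in>S. k y \<in> T"
    and compat: "\<forall>x\<in>S. \<forall>y\<in>S. h (f x y) = g (h x) (k y)"
    and closed: "\<forall>x\<in>S. \<forall>y\<in>S. f x y \<in> S"
  shows "right_congruence S f {(x, y). x \<in> S \<and> y \<in> S \<and> (h x, h y) \<in> \<rho>}"
proof (rule right_congruenceI)
  fix x y u assume "(x, y) \<in> {(x, y). x \<in> S \<and> y \<in> S \<and> (h x, h y) \<in> \<rho>}" and u: "u \<in> S"
  then have "x \<in> S" "y \<in> S" "(g (h x) (k u), g (h y) (k u)) \<in> \<rho>"
    using right_congruenceD(5)[OF \<rho>] k by auto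
  then show "(f x u, f y u) \<in> {(x, y). x \<in> S \<and> y \<in> S \<and> (h x, h y) \<in> \<rho>}"
    using compat closed u by auto
next
  fix x y z
  assume "(x, y) \<in> {(x, y). x \<in> S \<and> y \<in> S \<and> (h x, h y) \<in> \<rho>}"
    and "(y, z) \<in> {(x, y). x \<in> S \<and> y \<in> S \<and> (h x, h y) \<in> \<rho>}"
  then show "(x, z) \<in> {(x, y). x \<in> S \<and> y \<in> S \<and> (h x, h y) \<in> \<rho>}"
    using right_congruenceD(4)[OF \<rho>] by blast
qed (use right_congruenceD(2,3)[OF \<rho>] h in auto)

lemma right_cong_gen_map:
  assumes \<rho>: "right_congruence T g \<rho>"
    and h: "\<forall>x\<in>S. h x \<in> T" and k: "\<forall>y\<in>S. k y \<in> T"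
    and compat: "\<forall>x\<in>S. \<forall>y\<in>S. h (f x y) = g (h x) (k y)"
    and closed: "\<forall>x\<in>S. \<forall>y\<in>S. f x y \<in> S"
    and X: "X \<subseteq> S \<times> S" "\<forall>(x, y)\<in>X. (h x, h y) \<in> \<rho>"
    and xy: "(x, y) \<in> right_cong_gen S f X"
  shows "(h x, h y) \<in> \<rho>"
proof -
  have "X \<subseteq> {(x, y). x \<in> S \<and> y \<in> S \<and> (h x, h y) \<in> \<rho>}"
    using X by fast
  then have "right_cong_gen S f X \<subseteq> {(x, y). x \<in> S \<and> y \<in> S \<and> (h x, h y) \<in> \<rho>}"
    by (rule right_cong_gen_least[OF right_congruence_vimage[OF \<rho> h k compat closed]])
  then show ?thesis using xy by blast
qed

definition fin_gen_right_annihilator :: "'a set \<Rightarrow> ('a \<Rightarrow> 'a \<Rightarrow> 'a) \<Rightarrow> 'a \<Rightarrow> bool" where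
  "fin_gen_right_annihilator S f a \<longleftrightarrow>
     (\<exists>X. finite X \<and> X \<subseteq> S \<times> S \<and> right_cong_gen S f X = right_annihilator S f a)"

lemma fin_right_equated_iff: "fin_right_equated S f \<longleftrightarrow> (\<forall>a\<in>S. fin_gen_right_annihilator S f a)"
  unfolding fin_right_equated_def fin_gen_right_annihilator_def ..

lemma assoc_if_inj_hom:
  assumes inj: "inj_on h S" and h: "\<forall>x\<in>S. h x \<in> T"
    and hom: "\<forall>x\<in>S. \<forall>y\<in>S. h (f x y) = g (h x) (h y)"
    and closed_S: "\<forall>x\<in>S. \<forall>y\<in>S. f x y \<in> S"
    and assoc_T: "\<forall>x\<in>T. \<forall>y\<in>T. \<forall>z\<in>T. g (g x y) z = g x (g y z)"
  shows "\<forall>x\<in>S. \<forall>y\<in>S. \<forall>z\<in>S. f (f x y) z = f x (f y z)"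
proof (intro ballI)
  fix x y z assume "x \<in> S" "y \<in> S" "z \<in> S"
  then have "h (f (f x y) z) = h (f x (f y z))"
    using hom assoc_T h closed_S by simp
  then show "f (f x y) z = f x (f y z)"
    using inj closed_S \<open>x \<in> S\<close> \<open>y \<in> S\<close> \<open>z \<in> S\<close> by (simp add: inj_on_eq_iff)
qed

lemma right_cong_gen_hom_image_subset:
  assumes closed_T: "\<forall>x\<in>T. \<forall>y\<in>T. g x y \<in> T"
    and assoc_T: "\<forall>x\<in>T. \<forall>y\<in>T. \<forall>z\<in>T. g (g x y) z = g x (g y z)"
    and h: "\<forall>x\<in>S. h x \<in> T" and hom: "\<forall>x\<in>S. \<forall>y\<in>S. h (f x y) = g (h x) (h y)"
    and c: "c \<in> S" and X: "X \<subseteq> right_annihilator S f c"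
  shows "right_cong_gen T g ((\<lambda>(u, v). (h u, h v)) ` X) \<subseteq> right_annihilator T g (h c)"
proof (rule right_cong_gen_least[OF right_congruence_right_annihilator[OF closed_T assoc_T]])
  show "h c \<in> T" using h c by blast
  show "(\<lambda>(u, v). (h u, h v)) ` X \<subseteq> right_annihilator T g (h c)"
  proof safe
    fix u v assume "(u, v) \<in> X"
    then have "u \<in> S" "v \<in> S" "h (f c u) = h (f c v)"
      using X unfolding right_annihilator_def by auto
    then show "(h u, h v) \<in> right_annihilator T g (h c)"
      using h hom c unfolding right_annihilator_def by auto
  qed
qed

lemma right_annihilator_retract:
  assumes closed_S: "\<forall>x\<in>S. \<forall>y\<in>S. f x y \<in> S" and closed_T: "\<forall>x\<in>T. \<forall>y\<in>T. g x y \<in> T"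
    and assoc_T: "\<forall>x\<in>T. \<forall>y\<in>T. \<forall>z\<in>T. g (g x y) z = g x (g y z)"
    and h: "\<forall>x\<in>S. h x \<in> T" and p: "\<forall>y\<in>T. p y \<in> S"
    and hom_h: "\<forall>x\<in>S. \<forall>y\<in>S. h (f x y) = g (h x) (h y)"
    and hom_p: "\<forall>x\<in>T. \<forall>y\<in>T. p (g x y) = f (p x) (p y)"
    and retract: "\<forall>x\<in>S. p (h x) = x"
    and a: "a \<in> S" and X: "X \<subseteq> T \<times> T" "right_cong_gen T g X = right_annihilator T g (h a)"
  shows "right_cong_gen S f ((\<lambda>(u, v). (p u, p v)) ` X) = right_annihilator S f a"
proof
  let ?Y = "(\<lambda>(u, v). (p u, p v)) ` X"
  have "inj_on h S" using retract by (metis inj_on_inverseI)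
  then have assoc_S: "\<forall>x\<in>S. \<forall>y\<in>S. \<forall>z\<in>S. f (f x y) z = f x (f y z)"
    using assoc_if_inj_hom h hom_h closed_S assoc_T by blast
  have "h a \<in> T" using h a by blast
  then show "right_cong_gen S f ?Y \<subseteq> right_annihilator S f a"
    using right_cong_gen_hom_image_subset[OF closed_S assoc_S p hom_p] X right_cong_gen_upper retract a
    by metis
  show "right_annihilator S f a \<subseteq> right_cong_gen S f ?Y"
  proof safe
    fix s t assume "(s, t) \<in> right_annihilator S f a"
    then have st: "s \<in> S" "t \<in> S" "f a s = f a t" unfolding right_annihilator_def by auto
    then have "h (f a s) = h (f a t)" by simp
    then have "g (h a) (h s) = g (h a) (h t)"
      using hom_h a st(1,2) by simp
    then have hst: "(h s, h t) \<in> right_cong_gen T g X"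
      using X(2) h st unfolding right_annihilator_def by auto
    have Y: "?Y \<subseteq> S \<times> S" using X(1) p by auto
    have gen: "\<forall>(u, v)\<in>X. (p u, p v) \<in> right_cong_gen S f ?Y"
      using right_cong_gen_upper[of ?Y S f] by auto
    have "(p (h s), p (h t)) \<in> right_cong_gen S f ?Y"
      by (rule right_cong_gen_map[OF right_congruence_right_cong_gen[OF closed_S Y]
            p p hom_p closed_T X(1) gen hst])
    then show "(s, t) \<in> right_cong_gen S f ?Y" using retract st by simp
  qed
qed

lemma fin_right_equated_retract:
  assumes closed_S: "\<forall>x\<in>S. \<forall>y\<in>S. f x y \<in> S" and closed_T: "\<forall>x\<in>T. \<forall>y\<in>T. g x y \<in> T"
    and assoc_T: "\<forall>x\<in>T. \<forall>y\<in>T. \<forall>z\<in>T. g (g x y) z = g x (g y z)"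
    and h: "\<forall>x\<in>S. h x \<in> T" and p: "\<forall>y\<in>T. p y \<in> S"
    and hom_h: "\<forall>x\<in>S. \<forall>y\<in>S. h (f x y) = g (h x) (h y)"
    and hom_p: "\<forall>x\<in>T. \<forall>y\<in>T. p (g x y) = f (p x) (p y)"
    and retract: "\<forall>x\<in>S. p (h x) = x"
    and fre_T: "fin_right_equated T g"
  shows "fin_right_equated S f"
  unfolding fin_right_equated_def
proof
  fix a assume a: "a \<in> S"
  then have "h a \<in> T" using h by blast
  then obtain X where X: "finite X" "X \<subseteq> T \<times> T" "right_cong_gen T g X = right_annihilator T g (h a)"
    using fre_T unfolding fin_right_equated_def by blast
  show "\<exists>Y. finite Y \<and> Y \<subseteq> S \<times> S \<and> right_cong_gen S f Y = right_annihilator S f a"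
  proof (intro exI conjI)
    show "finite ((\<lambda>(u, v). (p u, p v)) ` X)" using X(1) by simp
    show "(\<lambda>(u, v). (p u, p v)) ` X \<subseteq> S \<times> S" using X(2) p by auto
  qed (rule right_annihilator_retract[OF assms(1-8) a X(2,3)])
qed

lemma fin_right_equated_iso:
  assumes bij: "bij_betw h S T" and hom: "\<forall>x\<in>S. \<forall>y\<in>S. h (f x y) = g (h x) (h y)"
    and closed_S: "\<forall>x\<in>S. \<forall>y\<in>S. f x y \<in> S" and closed_T: "\<forall>x\<in>T. \<forall>y\<in>T. g x y \<in> T"
    and assoc_T: "\<forall>x\<in>T. \<forall>y\<in>T. \<forall>z\<in>T. g (g x y) z = g x (g y z)"
  shows "fin_right_equated S f \<longleftrightarrow> fin_right_equated T g"
proof -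
  let ?k = "inv_into S h"
  have h: "\<forall>x\<in>S. h x \<in> T" using bij_betw_apply[OF bij] by blast
  have k: "\<forall>y\<in>T. ?k y \<in> S" using bij_betw_apply[OF bij_betw_inv_into[OF bij]] by blast
  have kh: "\<forall>x\<in>S. ?k (h x) = x" using bij_betw_inv_into_left[OF bij] by blast
  have hk: "\<forall>y\<in>T. h (?k y) = y" using bij_betw_inv_into_right[OF bij] by blast
  have hom_k: "\<forall>x\<in>T. \<forall>y\<in>T. ?k (g x y) = f (?k x) (?k y)"
  proof (intro ballI)
    fix x y assume "x \<in> T" "y \<in> T"
    then have "g x y = h (f (?k x) (?k y))" using hom hk k by simp
    then show "?k (g x y) = f (?k x) (?k y)" using kh k closed_S \<open>x \<in> T\<close> \<open>y \<in> T\<close> by simp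
  qed
  have assoc_S: "\<forall>x\<in>S. \<forall>y\<in>S. \<forall>z\<in>S. f (f x y) z = f x (f y z)"
    using assoc_if_inj_hom[OF bij_betw_imp_inj_on[OF bij] h hom closed_S assoc_T] .
  show ?thesis
    using fin_right_equated_retract[OF closed_S closed_T assoc_T h k hom hom_k kh]
      fin_right_equated_retract[OF closed_T closed_S assoc_S k h hom_k hom hk] by blast
qed

lemma right_cong_gen_subset_right_annihilator_mult:
  assumes closed: "\<forall>x\<in>S. \<forall>y\<in>S. f x y \<in> S"
    and assoc: "\<forall>x\<in>S. \<forall>y\<in>S. \<forall>z\<in>S. f (f x y) z = f x (f y z)"
    and p: "p \<in> S" and x: "x \<in> S" and b: "b \<in> S" and right_inv: "\<forall>y\<in>S. f x (f b y) = y"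
    and Y: "Y \<subseteq> right_annihilator S f p" and Z: "Z \<subseteq> right_annihilator S f x"
  shows "right_cong_gen S f (Z \<union> (\<lambda>(y, z). (f b y, f b z)) ` Y) \<subseteq> right_annihilator S f (f p x)"
proof (rule right_cong_gen_least[OF right_congruence_right_annihilator[OF closed assoc]])
  show "f p x \<in> S" using closed p x by auto
  show "Z \<union> (\<lambda>(y, z). (f b y, f b z)) ` Y \<subseteq> right_annihilator S f (f p x)"
  proof safe
    fix s t assume "(s, t) \<in> Z"
    then have "s \<in> S" "t \<in> S" "f x s = f x t"
      using Z unfolding right_annihilator_def by blast+
    then show "(s, t) \<in> right_annihilator S f (f p x)"
      using assoc p x unfolding right_annihilator_def by simp
  next
    fix s t assume "(s, t) \<in> Y"
    then have st: "s \<in> S" "t \<in> S" "f p s = f p t"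
      using Y unfolding right_annihilator_def by blast+
    have "f (f p x) (f b u) = f p u" if "u \<in> S" for u
    proof -
      have "f (f p x) (f b u) = f p (f x (f b u))" using assoc closed p x b that by simp
      then show ?thesis using right_inv that by simp
    qed
    then show "(f b s, f b t) \<in> right_annihilator S f (f p x)"
      using st closed b unfolding right_annihilator_def by auto
  qed
qed

lemma right_annihilator_mult_subset_right_cong_gen:
  assumes closed: "\<forall>x\<in>S. \<forall>y\<in>S. f x y \<in> S"
    and assoc: "\<forall>x\<in>S. \<forall>y\<in>S. \<forall>z\<in>S. f (f x y) z = f x (f y z)"
    and p: "p \<in> S" and x: "x \<in> S" and b: "b \<in> S" and right_inv: "\<forall>y\<in>S. f x (f b y) = y"
    and Y: "Y \<subseteq> S \<times> S" "right_annihilator S f p \<subseteq> right_cong_gen S f Y"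
    and Z: "Z \<subseteq> S \<times> S" "right_annihilator S f x \<subseteq> right_cong_gen S f Z"
  shows "right_annihilator S f (f p x) \<subseteq> right_cong_gen S f (Z \<union> (\<lambda>(y, z). (f b y, f b z)) ` Y)"
proof safe
  let ?G = "Z \<union> (\<lambda>(y, z). (f b y, f b z)) ` Y"
  let ?R = "right_cong_gen S f ?G"
  have rc: "right_congruence S f ?R"
    using Z(1) Y(1) closed b by (intro right_congruence_right_cong_gen) auto
  have cancel: "(u, f b (f x u)) \<in> ?R" if "u \<in> S" for u
  proof -
    have "(u, f b (f x u)) \<in> right_annihilator S f x"
      using that right_inv closed x b unfolding right_annihilator_def by auto
    then show ?thesis using Z(2) right_cong_gen_mono[of Z ?G] by auto
  qed
  fix s t assume "(s, t) \<in> right_annihilator S f (f p x)"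
  then have st: "s \<in> S" "t \<in> S" "f p (f x s) = f p (f x t)"
    using assoc p x unfolding right_annihilator_def by auto
  then have xst: "(f x s, f x t) \<in> right_cong_gen S f Y"
    using Y(2) closed x unfolding right_annihilator_def by auto
  have compat: "\<forall>u\<in>S. \<forall>w\<in>S. f b (f u w) = f (f b u) w" using assoc b by simp
  have gen: "\<forall>(u, w)\<in>Y. (f b u, f b w) \<in> ?R"
    using right_cong_gen_upper[of ?G S f] by auto
  have bS: "\<forall>u\<in>S. f b u \<in> S" and idS: "\<forall>u\<in>S. u \<in> S" using closed b by auto
  have "(f b (f x s), f b (f x t)) \<in> ?R"
    by (rule right_cong_gen_map[OF rc bS idS compat closed Y(1) gen xst])
  moreover have "(f b (f x t), t) \<in> ?R"
    using cancel st(2) right_congruenceD(3)[OF rc] by blast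
  ultimately show "(s, t) \<in> ?R"
    using cancel st(1) right_congruenceD(4)[OF rc] by blast
qed

lemma fin_gen_right_annihilator_mult_right_invertible:
  assumes closed: "\<forall>x\<in>S. \<forall>y\<in>S. f x y \<in> S"
    and assoc: "\<forall>x\<in>S. \<forall>y\<in>S. \<forall>z\<in>S. f (f x y) z = f x (f y z)"
    and p: "p \<in> S" and x: "x \<in> S" and b: "b \<in> S" and right_inv: "\<forall>y\<in>S. f x (f b y) = y"
    and "fin_gen_right_annihilator S f p" and "fin_gen_right_annihilator S f x"
  shows "fin_gen_right_annihilator S f (f p x)"
proof -
  obtain Y where Y: "finite Y" "Y \<subseteq> S \<times> S" "right_cong_gen S f Y = right_annihilator S f p"
    using assms(7) unfolding fin_gen_right_annihilator_def by blast
  obtain Z where Z: "finite Z" "Z \<subseteq> S \<times> S" "right_cong_gen S f Z = right_annihilator S f x"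
    using assms(8) unfolding fin_gen_right_annihilator_def by blast
  let ?G = "Z \<union> (\<lambda>(y, z). (f b y, f b z)) ` Y"
  have "right_cong_gen S f ?G = right_annihilator S f (f p x)"
  proof
    show "right_cong_gen S f ?G \<subseteq> right_annihilator S f (f p x)"
      using right_cong_gen_subset_right_annihilator_mult[OF closed assoc p x b right_inv]
        right_cong_gen_upper Y(3) Z(3) by metis
    show "right_annihilator S f (f p x) \<subseteq> right_cong_gen S f ?G"
      using right_annihilator_mult_subset_right_cong_gen[OF closed assoc p x b right_inv Y(2) _ Z(2)]
        Y(3) Z(3) by simp
  qed
  moreover have "finite ?G" "?G \<subseteq> S \<times> S" using Y Z closed b by auto
  ultimately show ?thesis unfolding fin_gen_right_annihilator_def by blast
qed

section \<open>Reduced words\<close>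

fun cons_reduced :: "('i \<Rightarrow> ('a, 'b) monoid_scheme) \<Rightarrow> 'i \<times> 'a \<Rightarrow> ('i \<times> 'a) list \<Rightarrow> ('i \<times> 'a) list" where
  "cons_reduced M (i, m) [] = (if m = \<one>\<^bsub>M i\<^esub> then [] else [(i, m)])"
| "cons_reduced M (i, m) ((j, b) # w) =
     (if j = i then (if m \<otimes>\<^bsub>M i\<^esub> b = \<one>\<^bsub>M i\<^esub> then w else (i, m \<otimes>\<^bsub>M i\<^esub> b) # w)
      else if m = \<one>\<^bsub>M i\<^esub> then (j, b) # w else (i, m) # (j, b) # w)"

definition letters :: "'i set \<Rightarrow> ('i \<Rightarrow> ('a, 'b) monoid_scheme) \<Rightarrow> ('i \<times> 'a) set" where
  "letters I M = {(i, a). i \<in> I \<and> a \<in> carrier (M i)}"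

definition reduced_words :: "'i set \<Rightarrow> ('i \<Rightarrow> ('a, 'b) monoid_scheme) \<Rightarrow> ('i \<times> 'a) list set" where
  "reduced_words I M = {w. distinct_adj (map fst w) \<and>
     (\<forall>(i, a)\<in>set w. i \<in> I \<and> a \<in> carrier (M i) \<and> a \<noteq> \<one>\<^bsub>M i\<^esub>)}"

definition reduce :: "('i \<Rightarrow> ('a, 'b) monoid_scheme) \<Rightarrow> ('i \<times> 'a) list \<Rightarrow> ('i \<times> 'a) list" where
  "reduce M u = foldr (cons_reduced M) u []"

definition reduced_mult ::
    "('i \<Rightarrow> ('a, 'b) monoid_scheme) \<Rightarrow> ('i \<times> 'a) list \<Rightarrow> ('i \<times> 'a) list \<Rightarrow> ('i \<times> 'a) list" where
  "reduced_mult M u v = reduce M (u @ v)"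

definition not_headed_by :: "'i \<Rightarrow> ('i \<times> 'a) list \<Rightarrow> bool" where
  "not_headed_by i w \<longleftrightarrow> w = [] \<or> fst (hd w) \<noteq> i"

lemma not_headed_by_simps [simp]: "not_headed_by i []" "not_headed_by i ((j, b) # w) \<longleftrightarrow> j \<noteq> i"
  by (auto simp: not_headed_by_def)

lemma reduced_words_Nil [simp]: "[] \<in> reduced_words I M"
  unfolding reduced_words_def by simp

lemma reduced_words_Cons:
  "(i, a) # w \<in> reduced_words I M \<longleftrightarrow>
     i \<in> I \<and> a \<in> carrier (M i) \<and> a \<noteq> \<one>\<^bsub>M i\<^esub> \<and> w \<in> reduced_words I M \<and> not_headed_by i w"
  by (cases w) (auto simp: reduced_words_def not_headed_by_def)

lemma reduced_words_append:
  "u @ v \<in> reduced_words I M \<longleftrightarrow> u \<in> reduced_words I M \<and> v \<in> reduced_words I M \<and>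
     (u = [] \<or> v = [] \<or> fst (last u) \<noteq> fst (hd v))"
  unfolding reduced_words_def by (auto simp: distinct_adj_append_iff last_map hd_map)

lemma reduced_words_letters: "w \<in> reduced_words I M \<Longrightarrow> set w \<subseteq> letters I M"
  unfolding reduced_words_def letters_def by auto

lemma cons_reduced_not_headed_by:
  "not_headed_by i w \<Longrightarrow> cons_reduced M (i, m) w = (if m = \<one>\<^bsub>M i\<^esub> then w else (i, m) # w)"
  by (cases w) (auto simp: not_headed_by_def)

locale monoid_family =
  fixes I :: "'i set" and M :: "'i \<Rightarrow> ('a, 'b) monoid_scheme"
  assumes monoid: "\<And>i. i \<in> I \<Longrightarrow> monoid (M i)"
begin

abbreviation "W \<equiv> reduced_words I M"
abbreviation "L \<equiv> letters I M"

lemma factor_one_closed: "i \<in> I \<Longrightarrow> \<one>\<^bsub>M i\<^esub> \<in> carrier (M i)"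
  using monoid.one_closed[OF monoid] .

lemma factor_m_closed:
  "i \<in> I \<Longrightarrow> x \<in> carrier (M i) \<Longrightarrow> y \<in> carrier (M i) \<Longrightarrow> x \<otimes>\<^bsub>M i\<^esub> y \<in> carrier (M i)"
  using monoid.m_closed[OF monoid] .

lemma factor_m_assoc:
  "i \<in> I \<Longrightarrow> x \<in> carrier (M i) \<Longrightarrow> y \<in> carrier (M i) \<Longrightarrow> z \<in> carrier (M i) \<Longrightarrow>
     x \<otimes>\<^bsub>M i\<^esub> y \<otimes>\<^bsub>M i\<^esub> z = x \<otimes>\<^bsub>M i\<^esub> (y \<otimes>\<^bsub>M i\<^esub> z)"
  using monoid.m_assoc[OF monoid] .

lemma factor_l_one: "i \<in> I \<Longrightarrow> x \<in> carrier (M i) \<Longrightarrow> \<one>\<^bsub>M i\<^esub> \<otimes>\<^bsub>M i\<^esub> x = x"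
  using monoid.l_one[OF monoid] .

lemma factor_r_one: "i \<in> I \<Longrightarrow> x \<in> carrier (M i) \<Longrightarrow> x \<otimes>\<^bsub>M i\<^esub> \<one>\<^bsub>M i\<^esub> = x"
  using monoid.r_one[OF monoid] .

lemma cons_reduced_closed:
  assumes "(i, m) \<in> L" and w: "w \<in> W"
  shows "cons_reduced M (i, m) w \<in> W"
proof (cases w)
  case (Cons l w')
  obtain j b where l: "l = (j, b)" by (cases l)
  show ?thesis
  proof (cases "j = i")
    case True
    then have "b \<in> carrier (M i)" "w' \<in> W" "not_headed_by i w'"
      using w Cons l by (auto simp: reduced_words_Cons)
    then show ?thesis
      using True Cons l assms factor_m_closed by (auto simp: reduced_words_Cons letters_def)
  qed (use Cons l assms in \<open>auto simp: reduced_words_Cons letters_def\<close>)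
qed (use assms in \<open>auto simp: reduced_words_Cons letters_def\<close>)

lemma cons_reduced_one: "i \<in> I \<Longrightarrow> w \<in> W \<Longrightarrow> cons_reduced M (i, \<one>\<^bsub>M i\<^esub>) w = w"
  by (cases w) (auto simp: reduced_words_Cons factor_l_one)

lemma cons_reduced_cons_reduced:
  assumes i: "i \<in> I" and m: "m \<in> carrier (M i)" and m': "m' \<in> carrier (M i)" and w: "w \<in> W"
  shows "cons_reduced M (i, m) (cons_reduced M (i, m') w) = cons_reduced M (i, m \<otimes>\<^bsub>M i\<^esub> m') w"
proof (cases w)
  case Nil
  then show ?thesis using i m factor_r_one by auto
next
  case (Cons l w')
  obtain j b where l: "l = (j, b)" by (cases l)
  show ?thesis
  proof (cases "j = i")
    case True
    then have b: "b \<in> carrier (M i)" and w': "w' \<in> W" "not_headed_by i w'"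
      using w Cons l by (auto simp: reduced_words_Cons)
    have assoc: "m \<otimes>\<^bsub>M i\<^esub> m' \<otimes>\<^bsub>M i\<^esub> b = m \<otimes>\<^bsub>M i\<^esub> (m' \<otimes>\<^bsub>M i\<^esub> b)"
      using factor_m_assoc i m m' b by blast
    show ?thesis
    proof (cases "m' \<otimes>\<^bsub>M i\<^esub> b = \<one>\<^bsub>M i\<^esub>")
      case cancel: True
      then have "m \<otimes>\<^bsub>M i\<^esub> m' \<otimes>\<^bsub>M i\<^esub> b = m" using assoc factor_r_one i m by simp
      then show ?thesis
        using cancel True Cons l cons_reduced_not_headed_by[OF w'(2), of M m]
          cons_reduced_one[OF i w'(1)] by simp
    qed (use True Cons l assoc in simp)
  next
    case False
    then show ?thesis
      using Cons l factor_r_one i m cons_reduced_one[OF i w] by auto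
  qed
qed

lemma foldr_cons_reduced_closed: "set u \<subseteq> L \<Longrightarrow> w \<in> W \<Longrightarrow> foldr (cons_reduced M) u w \<in> W"
  by (induction u) (auto intro: cons_reduced_closed)

lemma reduce_closed: "set u \<subseteq> L \<Longrightarrow> reduce M u \<in> W"
  unfolding reduce_def by (rule foldr_cons_reduced_closed) auto

lemma reduce_reduced: "w \<in> W \<Longrightarrow> reduce M w = w"
proof (induction w)
  case (Cons l w)
  obtain i a where l: "l = (i, a)" by (cases l)
  then have "a \<noteq> \<one>\<^bsub>M i\<^esub>" "w \<in> W" and hd: "not_headed_by i w"
    using Cons.prems by (auto simp: reduced_words_Cons)
  then show ?case
    using Cons.IH l cons_reduced_not_headed_by[OF hd, of M a] by (simp add: reduce_def)
qed (simp add: reduce_def)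

lemma foldr_cons_reduced_cons_reduced:
  assumes w0: "w0 \<in> W" and l: "l \<in> L" and w: "w \<in> W"
  shows "foldr (cons_reduced M) (cons_reduced M l w0) w = cons_reduced M l (foldr (cons_reduced M) w0 w)"
proof -
  obtain i m where lm: "l = (i, m)" "i \<in> I" "m \<in> carrier (M i)" using l by (auto simp: letters_def)
  show ?thesis
  proof (cases w0)
    case Nil
    then show ?thesis using lm cons_reduced_one w by auto
  next
    case (Cons l' w')
    obtain j b where l': "l' = (j, b)" by (cases l')
    have jb: "b \<in> carrier (M j)" "w' \<in> W"
      using w0 Cons l' by (auto simp: reduced_words_Cons)
    have fw': "foldr (cons_reduced M) w' w \<in> W"
      using foldr_cons_reduced_closed[OF reduced_words_letters[OF jb(2)] w] .
    show ?thesis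
    proof (cases "j = i")
      case True
      then have "cons_reduced M (i, m) (cons_reduced M (i, b) (foldr (cons_reduced M) w' w))
          = cons_reduced M (i, m \<otimes>\<^bsub>M i\<^esub> b) (foldr (cons_reduced M) w' w)"
        using cons_reduced_cons_reduced[OF lm(2,3) _ fw'] jb by simp
      then show ?thesis
        using True Cons l' lm cons_reduced_one[OF lm(2) fw'] by auto
    next
      case False
      then show ?thesis
        using Cons l' lm cons_reduced_one[OF lm(2)]
          foldr_cons_reduced_closed[OF reduced_words_letters[OF w0] w]
        by auto
    qed
  qed
qed

lemma foldr_reduce:
  assumes "set u \<subseteq> L" and "w \<in> W"
  shows "foldr (cons_reduced M) u w = foldr (cons_reduced M) (reduce M u) w"
  using assms
proof (induction u)
  case (Cons l u)
  then have "foldr (cons_reduced M) (l # u) w = cons_reduced M l (foldr (cons_reduced M) (reduce M u) w)"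
    by simp
  also have "\<dots> = foldr (cons_reduced M) (reduce M (l # u)) w"
    using foldr_cons_reduced_cons_reduced[OF reduce_closed] Cons.prems by (simp add: reduce_def)
  finally show ?case .
qed (simp add: reduce_def)

lemma reduce_append:
  assumes "set u \<subseteq> L" and "set v \<subseteq> L"
  shows "reduce M (u @ v) = reduce M (reduce M u @ reduce M v)"
proof -
  have "reduce M (u @ v) = foldr (cons_reduced M) u (reduce M v)" by (simp add: reduce_def)
  also have "\<dots> = foldr (cons_reduced M) (reduce M u) (reduce M v)"
    using foldr_reduce assms reduce_closed by blast
  also have "\<dots> = reduce M (reduce M u @ reduce M v)"
    using reduce_reduced[OF reduce_closed[OF assms(2)]] by (simp add: reduce_def)
  finally show ?thesis .
qed

lemma reduced_mult_closed: "\<forall>u\<in>W. \<forall>v\<in>W. reduced_mult M u v \<in> W"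
  unfolding reduced_mult_def by (intro ballI reduce_closed) (auto dest: reduced_words_letters)

lemma reduced_mult_assoc:
  "\<forall>u\<in>W. \<forall>v\<in>W. \<forall>x\<in>W. reduced_mult M (reduced_mult M u v) x = reduced_mult M u (reduced_mult M v x)"
proof (intro ballI)
  fix u v x assume W: "u \<in> W" "v \<in> W" "x \<in> W"
  then have L: "set u \<subseteq> L" "set v \<subseteq> L" "set x \<subseteq> L" using reduced_words_letters by auto
  have "reduced_mult M (reduced_mult M u v) x = reduce M (reduce M (u @ v) @ reduce M x)"
    unfolding reduced_mult_def using reduce_reduced W by simp
  also have "\<dots> = reduce M (reduce M u @ reduce M (v @ x))"
    using reduce_append[of "u @ v" x] reduce_append[of u "v @ x"] L by simp
  also have "\<dots> = reduced_mult M u (reduced_mult M v x)"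
    unfolding reduced_mult_def using reduce_reduced W by simp
  finally show "reduced_mult M (reduced_mult M u v) x = reduced_mult M u (reduced_mult M v x)" .
qed

lemma reduced_mult_Nil: "w \<in> W \<Longrightarrow> reduced_mult M [] w = w" "w \<in> W \<Longrightarrow> reduced_mult M w [] = w"
  unfolding reduced_mult_def using reduce_reduced by auto


definition head_part :: "'i \<Rightarrow> ('i \<times> 'a) list \<Rightarrow> 'a" where
  "head_part i w = (if w \<noteq> [] \<and> fst (hd w) = i then snd (hd w) else \<one>\<^bsub>M i\<^esub>)"

definition tail_part :: "'i \<Rightarrow> ('i \<times> 'a) list \<Rightarrow> ('i \<times> 'a) list" where
  "tail_part i w = (if w \<noteq> [] \<and> fst (hd w) = i then tl w else w)"

lemma reduced_word_decomp:
  assumes i: "i \<in> I" and w: "w \<in> W"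
  shows "head_part i w \<in> carrier (M i)" and "tail_part i w \<in> W" and "not_headed_by i (tail_part i w)"
    and "cons_reduced M (i, head_part i w) (tail_part i w) = w"
proof -
  have "head_part i w \<in> carrier (M i) \<and> tail_part i w \<in> W \<and> not_headed_by i (tail_part i w) \<and>
      cons_reduced M (i, head_part i w) (tail_part i w) = w"
  proof (cases w)
    case (Cons l w')
    obtain j b where l: "l = (j, b)" by (cases l)
    have jb: "b \<in> carrier (M j)" "b \<noteq> \<one>\<^bsub>M j\<^esub>" "w' \<in> W" "not_headed_by j w'"
      using w Cons l by (auto simp: reduced_words_Cons)
    show ?thesis
    proof (cases "j = i")
      case True
      then show ?thesis
        using jb Cons l cons_reduced_not_headed_by[OF jb(4), of M b]
          by (simp add: head_part_def tail_part_def)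
    next
      case False
      then show ?thesis
        using Cons l w cons_reduced_one[OF i w] factor_one_closed[OF i]
          by (simp add: head_part_def tail_part_def)
    qed
  qed (simp add: head_part_def tail_part_def factor_one_closed[OF i])
  then show "head_part i w \<in> carrier (M i)" and "tail_part i w \<in> W" and "not_headed_by i (tail_part i w)"
    and "cons_reduced M (i, head_part i w) (tail_part i w) = w"
    by auto
qed

lemma cons_reduced_decomp:
  assumes i: "i \<in> I" and m: "m \<in> carrier (M i)" and w: "w \<in> W"
  shows "cons_reduced M (i, m) w =
    (if m \<otimes>\<^bsub>M i\<^esub> head_part i w = \<one>\<^bsub>M i\<^esub> then tail_part i w
     else (i, m \<otimes>\<^bsub>M i\<^esub> head_part i w) # tail_part i w)"
proof -
  note d = reduced_word_decomp[OF i w]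
  have "cons_reduced M (i, m) w = cons_reduced M (i, m \<otimes>\<^bsub>M i\<^esub> head_part i w) (tail_part i w)"
    using cons_reduced_cons_reduced[OF i m d(1,2)] d(4) by simp
  then show ?thesis using cons_reduced_not_headed_by[OF d(3), of M] by simp
qed

end

lemma semigroup_congruence_iff_right_congruence:
  "semigroup_congruence S f \<theta> \<longleftrightarrow> right_congruence S f \<theta> \<and> right_congruence S (\<lambda>x y. f y x) \<theta>"
  unfolding semigroup_congruence_def right_congruence_def by blast

lemma semigroup_congruenceD:
  assumes "semigroup_congruence S f \<theta>"
  shows "\<theta> \<subseteq> S \<times> S" and "x \<in> S \<Longrightarrow> (x, x) \<in> \<theta>" and "(x, y) \<in> \<theta> \<Longrightarrow> (y, x) \<in> \<theta>"
    and "(x, y) \<in> \<theta> \<Longrightarrow> (y, z) \<in> \<theta> \<Longrightarrow> (x, z) \<in> \<theta>"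
    and "(x, y) \<in> \<theta> \<Longrightarrow> u \<in> S \<Longrightarrow> (f x u, f y u) \<in> \<theta>"
    and "(x, y) \<in> \<theta> \<Longrightarrow> u \<in> S \<Longrightarrow> (f u x, f u y) \<in> \<theta>"
  using assms unfolding semigroup_congruence_iff_right_congruence
  by (auto dest: right_congruenceD)

lemma cong_gen_upper: "X \<subseteq> cong_gen S f X"
  unfolding cong_gen_def by blast

lemma cong_gen_least: "semigroup_congruence S f \<theta> \<Longrightarrow> X \<subseteq> \<theta> \<Longrightarrow> cong_gen S f X \<subseteq> \<theta>"
  unfolding cong_gen_def by blast

lemma semigroup_congruence_cong_gen:
  assumes closed: "\<forall>x\<in>S. \<forall>y\<in>S. f x y \<in> S" and X: "X \<subseteq> S \<times> S"
  shows "semigroup_congruence S f (cong_gen S f X)"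
proof -
  let ?\<F> = "{\<theta>. semigroup_congruence S f \<theta> \<and> X \<subseteq> \<theta>}"
  have "semigroup_congruence S f (S \<times> S)"
    using closed unfolding semigroup_congruence_iff_right_congruence
    by (auto intro: right_congruenceI)
  then have "?\<F> \<noteq> {}" using X by blast
  then show ?thesis
    unfolding cong_gen_def semigroup_congruence_iff_right_congruence
    by (auto intro!: right_congruence_Inter simp: semigroup_congruence_iff_right_congruence)
qed

lemma semigroup_congruence_kernel:
  assumes closed: "\<forall>x\<in>S. \<forall>y\<in>S. f x y \<in> S"
    and compat: "\<forall>x\<in>S. \<forall>y\<in>S. \<phi> (f x y) = F (\<phi> x) (\<phi> y)"
  shows "semigroup_congruence S f {(x, y). x \<in> S \<and> y \<in> S \<and> \<phi> x = \<phi> y}"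
  unfolding semigroup_congruence_iff_right_congruence
  using closed compat by (auto intro!: right_congruenceI)

lemma sg_free_prod_carrier_iff:
  "w \<in> sg_free_prod_carrier I M \<longleftrightarrow> w \<noteq> [] \<and> set w \<subseteq> letters I M \<and> distinct_adj (map fst w)"
  unfolding sg_free_prod_carrier_def letters_def distinct_adj_conv_nth by auto

context monoid_family
begin

abbreviation "C \<equiv> sg_free_prod_carrier I M"
abbreviation "\<theta> \<equiv> free_prod_cong I M"

lemma sg_free_prod_carrier_letters: "u \<in> C \<Longrightarrow> set u \<subseteq> L"
  unfolding sg_free_prod_carrier_iff by auto

lemma sg_free_prod_carrier_reduced: "w \<in> W \<Longrightarrow> w \<noteq> [] \<Longrightarrow> w \<in> C"
  unfolding sg_free_prod_carrier_iff using reduced_words_letters by (auto simp: reduced_words_def)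

lemma sg_free_prod_carrier_single: "i \<in> I \<Longrightarrow> m \<in> carrier (M i) \<Longrightarrow> [(i, m)] \<in> C"
  by (simp add: sg_free_prod_carrier_iff letters_def)

lemma sg_free_prod_mult_cases:
  assumes u: "u \<in> C" and v: "v \<in> C"
  obtains (merge) u0 i a b v0 where "u = u0 @ [(i, a)]" "v = (i, b) # v0"
      "sg_free_prod_mult M u v = u0 @ [(i, a \<otimes>\<^bsub>M i\<^esub> b)] @ v0"
  | (concat) "fst (last u) \<noteq> fst (hd v)" "sg_free_prod_mult M u v = u @ v"
proof (cases "fst (last u) = fst (hd v)")
  case True
  obtain i a where la: "last u = (i, a)" by (cases "last u")
  obtain j b where hb: "hd v = (j, b)" by (cases "hd v")
  have "u \<noteq> []" "v \<noteq> []" using u v by (auto simp: sg_free_prod_carrier_iff)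
  then have "u = butlast u @ [(i, a)]" "v = (i, b) # tl v"
    using True la hb by (metis append_butlast_last_id, metis fst_conv list.collapse)
  moreover have "sg_free_prod_mult M u v = butlast u @ [(i, a \<otimes>\<^bsub>M i\<^esub> b)] @ tl v"
    using True la hb unfolding sg_free_prod_mult_def by simp
  ultimately show ?thesis using merge by metis
qed (simp add: concat sg_free_prod_mult_def)

lemma sg_free_prod_mult_closed: "\<forall>u\<in>C. \<forall>v\<in>C. sg_free_prod_mult M u v \<in> C"
proof (intro ballI)
  fix u v assume u: "u \<in> C" and v: "v \<in> C"
  then show "sg_free_prod_mult M u v \<in> C"
  proof (cases rule: sg_free_prod_mult_cases)
    case (merge u0 i a b v0)
    have "(i, a) \<in> L" "(i, b) \<in> L" using u v merge by (auto simp: sg_free_prod_carrier_iff)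
    then have "(i, a \<otimes>\<^bsub>M i\<^esub> b) \<in> L" using factor_m_closed by (auto simp: letters_def)
    then show ?thesis
      using u v merge by (auto simp: sg_free_prod_carrier_iff distinct_adj_append_iff distinct_adj_Cons)
  next
    case concat
    then show ?thesis
      using u v by (auto simp: sg_free_prod_carrier_iff distinct_adj_append_iff last_map hd_map)
  qed
qed

lemma reduce_sg_free_prod_mult:
  assumes u: "u \<in> C" and v: "v \<in> C"
  shows "reduce M (sg_free_prod_mult M u v) = reduced_mult M (reduce M u) (reduce M v)"
proof -
  have "reduce M (sg_free_prod_mult M u v) = reduce M (u @ v)"
    using u v
  proof (cases rule: sg_free_prod_mult_cases)
    case (merge u0 i a b v0)
    have L: "set v0 \<subseteq> L" "i \<in> I" "a \<in> carrier (M i)" "b \<in> carrier (M i)"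
      using u v merge by (auto simp: sg_free_prod_carrier_iff letters_def)
    show ?thesis
      using merge cons_reduced_cons_reduced[OF L(2-4) reduce_closed[OF L(1)]] by (simp add: reduce_def)
  qed simp
  then show ?thesis
    unfolding reduced_mult_def using reduce_append sg_free_prod_carrier_letters u v by simp
qed

lemma free_prod_cong_congruence: "semigroup_congruence C (sg_free_prod_mult M) \<theta>"
  unfolding free_prod_cong_def
  by (rule semigroup_congruence_cong_gen[OF sg_free_prod_mult_closed])
    (auto simp: sg_free_prod_carrier_iff letters_def factor_one_closed)

lemmas free_prod_cong_refl = semigroup_congruenceD(2)[OF free_prod_cong_congruence]
lemmas free_prod_cong_sym = semigroup_congruenceD(3)[OF free_prod_cong_congruence]
lemmas free_prod_cong_trans = semigroup_congruenceD(4)[OF free_prod_cong_congruence]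
lemmas free_prod_cong_mult_right = semigroup_congruenceD(5)[OF free_prod_cong_congruence]
lemmas free_prod_cong_mult_left = semigroup_congruenceD(6)[OF free_prod_cong_congruence]

lemma free_prod_cong_ones: "i \<in> I \<Longrightarrow> j \<in> I \<Longrightarrow> ([(i, \<one>\<^bsub>M i\<^esub>)], [(j, \<one>\<^bsub>M j\<^esub>)]) \<in> \<theta>"
  unfolding free_prod_cong_def by (rule subsetD[OF cong_gen_upper]) blast

definition kernel_reduce :: "(('i \<times> 'a) list \<times> ('i \<times> 'a) list) set" where
  "kernel_reduce = {(u, v). u \<in> C \<and> v \<in> C \<and> reduce M u = reduce M v}"

lemma free_prod_cong_subset_kernel: "\<theta> \<subseteq> kernel_reduce"
  unfolding free_prod_cong_def kernel_reduce_def
proof (rule cong_gen_least)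
  show "semigroup_congruence C (sg_free_prod_mult M) {(u, v). u \<in> C \<and> v \<in> C \<and> reduce M u = reduce M v}"
    using sg_free_prod_mult_closed reduce_sg_free_prod_mult by (intro semigroup_congruence_kernel) auto
qed (auto simp: sg_free_prod_carrier_iff letters_def factor_one_closed reduce_def)

text \<open>The empty word has no representative of its own in the semigroup free product; any identity
  letter serves, since all of them are identified by the congruence.\<close>

definition representative :: "('i \<times> 'a) list \<Rightarrow> ('i \<times> 'a) list" where
  "representative w = (if w = [] then [(SOME i. i \<in> I, \<one>\<^bsub>M (SOME i. i \<in> I)\<^esub>)] else w)"


lemma some_index: "i \<in> I \<Longrightarrow> (SOME i. i \<in> I) \<in> I"
  by (rule someI)

lemma representative_carrier: "i \<in> I \<Longrightarrow> w \<in> W \<Longrightarrow> representative w \<in> C"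
  unfolding representative_def
  using sg_free_prod_carrier_reduced sg_free_prod_carrier_single some_index factor_one_closed by auto

lemma sg_free_prod_mult_letter:
  assumes i: "i \<in> I" and m: "m \<in> carrier (M i)" and w: "w \<in> W" "w \<noteq> []"
  shows "sg_free_prod_mult M [(i, m)] w = (i, m \<otimes>\<^bsub>M i\<^esub> head_part i w) # tail_part i w"
proof -
  obtain j b w' where w': "w = (j, b) # w'" using w(2) by (cases w) auto
  show ?thesis
    using w' factor_r_one[OF i m] by (simp add: sg_free_prod_mult_def head_part_def tail_part_def)
qed

lemma free_prod_cong_one_Cons:
  assumes i: "i \<in> I" and r: "r \<in> W" "not_headed_by i r"
  shows "((i, \<one>\<^bsub>M i\<^esub>) # r, representative r) \<in> \<theta>"
proof (cases r)
  case Nil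
  then show ?thesis
    using free_prod_cong_ones[OF i some_index[OF i]] by (simp add: representative_def)
next
  case (Cons l r')
  obtain k c where l: "l = (k, c)" by (cases l)
  have kc: "k \<in> I" "c \<in> carrier (M k)" "k \<noteq> i" using r Cons l by (auto simp: reduced_words_Cons)
  have "(sg_free_prod_mult M [(i, \<one>\<^bsub>M i\<^esub>)] r, sg_free_prod_mult M [(k, \<one>\<^bsub>M k\<^esub>)] r) \<in> \<theta>"
    using free_prod_cong_mult_right[OF free_prod_cong_ones[OF i kc(1)]] r Cons
      sg_free_prod_carrier_reduced by blast
  then show ?thesis
    using Cons l kc factor_l_one[OF kc(1,2)] by (simp add: sg_free_prod_mult_def representative_def)
qed

lemma free_prod_cong_letter_Nil:
  assumes i: "i \<in> I" and m: "m \<in> carrier (M i)"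
  shows "([(i, m)], representative (cons_reduced M (i, m) [])) \<in> \<theta>"
  using free_prod_cong_ones[OF i some_index[OF i]]
    free_prod_cong_refl[OF sg_free_prod_carrier_single[OF i m]]
  by (simp add: representative_def)

lemma free_prod_cong_letter_mult:
  assumes i: "i \<in> I" and m: "m \<in> carrier (M i)" and w: "w \<in> W"
  shows "(sg_free_prod_mult M [(i, m)] (representative w), representative (cons_reduced M (i, m) w)) \<in> \<theta>"
proof (cases "w = []")
  case True
  have "(sg_free_prod_mult M [(i, m)] (representative w), sg_free_prod_mult M [(i, m)] [(i, \<one>\<^bsub>M i\<^esub>)]) \<in> \<theta>"
    using free_prod_cong_mult_left[OF free_prod_cong_ones[OF some_index[OF i] i]]
      sg_free_prod_carrier_single[OF i m] True by (simp add: representative_def)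
  then have "(sg_free_prod_mult M [(i, m)] (representative w), [(i, m)]) \<in> \<theta>"
    using factor_r_one[OF i m] by (simp add: sg_free_prod_mult_def)
  then show ?thesis
    using free_prod_cong_trans free_prod_cong_letter_Nil[OF i m] True by blast
next
  case False
  let ?c = "m \<otimes>\<^bsub>M i\<^esub> head_part i w" and ?r = "tail_part i w"
  note d = reduced_word_decomp[OF i w]
  have c: "?c \<in> carrier (M i)" using factor_m_closed[OF i m d(1)] .
  have lhs: "sg_free_prod_mult M [(i, m)] (representative w) = (i, ?c) # ?r"
    using sg_free_prod_mult_letter[OF i m w False] False by (simp add: representative_def)
  show ?thesis
  proof (cases "?c = \<one>\<^bsub>M i\<^esub>")
    case True
    then show ?thesis
      using lhs cons_reduced_decomp[OF i m w] free_prod_cong_one_Cons[OF i d(2,3)] by simp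
  next
    case False
    then have "(i, ?c) # ?r \<in> C"
      using sg_free_prod_carrier_reduced i c d(2,3) by (simp add: reduced_words_Cons)
    then show ?thesis
      using lhs False cons_reduced_decomp[OF i m w] free_prod_cong_refl
        by (simp add: representative_def)
  qed
qed

lemma free_prod_cong_reduce: "u \<in> C \<Longrightarrow> (u, representative (reduce M u)) \<in> \<theta>"
proof (induction u)
  case (Cons l u')
  obtain i m where l: "l = (i, m)" by (cases l)
  have im: "i \<in> I" "m \<in> carrier (M i)" using Cons.prems l
    by (auto simp: sg_free_prod_carrier_iff letters_def)
  show ?case
  proof (cases "u' = []")
    case True
    then show ?thesis using free_prod_cong_letter_Nil[OF im] l by (simp add: reduce_def)
  next
    case False
    have u': "u' \<in> C" and "fst l \<noteq> fst (hd u')"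
      using Cons.prems False by (auto simp: sg_free_prod_carrier_iff distinct_adj_Cons hd_map)
    then have "l # u' = sg_free_prod_mult M [l] u'"
      using False by (simp add: sg_free_prod_mult_def)
    moreover have
      "(sg_free_prod_mult M [l] u', sg_free_prod_mult M [l] (representative (reduce M u'))) \<in> \<theta>"
      using free_prod_cong_mult_left[OF Cons.IH[OF u']] sg_free_prod_carrier_single[OF im] l by simp
    moreover have "(sg_free_prod_mult M [l] (representative (reduce M u')),
        representative (reduce M (l # u'))) \<in> \<theta>"
      using free_prod_cong_letter_mult[OF im reduce_closed[OF sg_free_prod_carrier_letters[OF u']]] l
      by (simp add: reduce_def)
    ultimately show ?thesis using free_prod_cong_trans by metis
  qed
qed (simp add: sg_free_prod_carrier_iff)

lemma free_prod_cong_eq_kernel: "\<theta> = kernel_reduce"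
proof
  show "kernel_reduce \<subseteq> \<theta>"
  proof safe
    fix u v assume "(u, v) \<in> kernel_reduce"
    then have "u \<in> C" "v \<in> C" "reduce M u = reduce M v" by (auto simp: kernel_reduce_def)
    then show "(u, v) \<in> \<theta>"
      using free_prod_cong_reduce free_prod_cong_sym free_prod_cong_trans by metis
  qed
qed (rule free_prod_cong_subset_kernel)

end

section \<open>Reduced words model the monoid free product\<close>

context monoid_family
begin

abbreviation "F \<equiv> monoid_free_prod I M"

lemma free_prod_cong_equiv: "equiv C \<theta>"
  using free_prod_cong_congruence unfolding semigroup_congruence_def by blast

lemma carrier_monoid_free_prod: "carrier F = C // \<theta>"
  by (simp add: monoid_free_prod_def)

lemma some_in_class: "A \<in> C // \<theta> \<Longrightarrow> (SOME u. u \<in> A) \<in> A \<and> (SOME u. u \<in> A) \<in> C"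
  by (metis Union_quotient Union_upper equiv_class_self free_prod_cong_equiv quotientE someI subsetD)

definition reduced_of_class :: "('i \<times> 'a) list set \<Rightarrow> ('i \<times> 'a) list" where
  "reduced_of_class A = reduce M (SOME u. u \<in> A)"

lemma reduced_of_class_class: "u \<in> C \<Longrightarrow> reduced_of_class (\<theta> `` {u}) = reduce M u"
proof -
  assume u: "u \<in> C"
  define v where "v = (SOME v. v \<in> \<theta> `` {u})"
  have "(u, v) \<in> \<theta>"
    using some_in_class[OF quotientI[OF u]] unfolding v_def by blast
  then have "reduce M v = reduce M u"
    unfolding free_prod_cong_eq_kernel kernel_reduce_def by simp
  then show ?thesis unfolding reduced_of_class_def v_def .
qed

lemma reduced_of_class_bij: "i \<in> I \<Longrightarrow> bij_betw reduced_of_class (carrier F) W"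
  unfolding carrier_monoid_free_prod
proof (rule bij_betw_imageI)
  show "inj_on reduced_of_class (C // \<theta>)"
  proof (rule inj_onI)
    fix A B assume "A \<in> C // \<theta>" "B \<in> C // \<theta>" and eq: "reduced_of_class A = reduced_of_class B"
    then obtain u v where u: "u \<in> C" "A = \<theta> `` {u}" and v: "v \<in> C" "B = \<theta> `` {v}"
      by (auto elim!: quotientE)
    then have "(u, v) \<in> \<theta>"
      using eq reduced_of_class_class unfolding free_prod_cong_eq_kernel kernel_reduce_def by simp
    then show "A = B" using u v equiv_class_eq[OF free_prod_cong_equiv] by simp
  qed
  assume i: "i \<in> I"
  show "reduced_of_class ` (C // \<theta>) = W"
  proof safe
    fix A assume "A \<in> C // \<theta>"
    then show "reduced_of_class A \<in> W"
      by (auto elim!: quotientE simp: reduced_of_class_class reduce_closed sg_free_prod_carrier_letters)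
  next
    fix w assume w: "w \<in> W"
    have rep: "representative w \<in> C" using representative_carrier[OF i w] .
    have "reduce M (representative w) = w"
      using reduce_reduced[OF w] by (simp add: representative_def reduce_def factor_one_closed)
    then have "reduced_of_class (\<theta> `` {representative w}) = w"
      using reduced_of_class_class[OF rep] by simp
    then show "w \<in> reduced_of_class ` (C // \<theta>)" using quotientI[OF rep] by force
  qed
qed

lemma monoid_free_prod_mult_closed: "\<forall>A\<in>carrier F. \<forall>B\<in>carrier F. A \<otimes>\<^bsub>F\<^esub> B \<in> carrier F"
  using some_in_class sg_free_prod_mult_closed
  by (auto simp: carrier_monoid_free_prod monoid_free_prod_def intro!: quotientI)

lemma reduced_of_class_hom:
  "\<forall>A\<in>carrier F. \<forall>B\<in>carrier F.
     reduced_of_class (A \<otimes>\<^bsub>F\<^esub> B) = reduced_mult M (reduced_of_class A) (reduced_of_class B)"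
  using some_in_class sg_free_prod_mult_closed
  by (auto simp: carrier_monoid_free_prod monoid_free_prod_def reduced_of_class_class
      reduce_sg_free_prod_mult) (simp add: reduced_of_class_def)

lemma FRE_monoid_free_prod_iff: "i \<in> I \<Longrightarrow> FRE F \<longleftrightarrow> fin_right_equated W (reduced_mult M)"
  using reduced_mult_closed reduced_mult_assoc
  by (intro fin_right_equated_iso[OF reduced_of_class_bij reduced_of_class_hom
        monoid_free_prod_mult_closed])
    auto

end

section \<open>The factors are retracts\<close>

context monoid_family
begin

definition letter_word :: "'i \<Rightarrow> 'a \<Rightarrow> ('i \<times> 'a) list" where
  "letter_word i x = (if x = \<one>\<^bsub>M i\<^esub> then [] else [(i, x)])"

definition factor_proj :: "'i \<Rightarrow> ('i \<times> 'a) list \<Rightarrow> 'a" where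
  "factor_proj i w = foldr (\<lambda>(j, a) x. if j = i then a \<otimes>\<^bsub>M i\<^esub> x else x) w \<one>\<^bsub>M i\<^esub>"

lemma factor_proj_simps [simp]:
  "factor_proj i [] = \<one>\<^bsub>M i\<^esub>"
  "factor_proj i ((j, a) # w) = (if j = i then a \<otimes>\<^bsub>M i\<^esub> factor_proj i w else factor_proj i w)"
  by (simp_all add: factor_proj_def)

lemma letter_word_closed: "i \<in> I \<Longrightarrow> x \<in> carrier (M i) \<Longrightarrow> letter_word i x \<in> W"
  unfolding letter_word_def by (auto simp: reduced_words_Cons)

lemma reduced_mult_letter_word:
  "i \<in> I \<Longrightarrow> x \<in> carrier (M i) \<Longrightarrow> w \<in> W \<Longrightarrow> reduced_mult M (letter_word i x) w = cons_reduced M (i, x) w"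
  unfolding reduced_mult_def letter_word_def using reduce_reduced cons_reduced_one
    by (auto simp: reduce_def)

lemma reduced_mult_letter_words:
  "i \<in> I \<Longrightarrow> x \<in> carrier (M i) \<Longrightarrow> y \<in> carrier (M i) \<Longrightarrow>
     reduced_mult M (letter_word i x) (letter_word i y) = letter_word i (x \<otimes>\<^bsub>M i\<^esub> y)"
  using reduced_mult_letter_word letter_word_closed factor_r_one by (simp add: letter_word_def)

lemma factor_proj_closed: "i \<in> I \<Longrightarrow> set w \<subseteq> L \<Longrightarrow> factor_proj i w \<in> carrier (M i)"
  by (induction w) (auto simp: factor_one_closed factor_m_closed letters_def)

lemma factor_proj_append:
  "i \<in> I \<Longrightarrow> set u \<subseteq> L \<Longrightarrow> set v \<subseteq> L \<Longrightarrow> factor_proj i (u @ v) = factor_proj i u \<otimes>\<^bsub>M i\<^esub> factor_proj i v"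
  by (induction u) (auto simp: factor_l_one factor_m_assoc factor_proj_closed letters_def)

lemma factor_proj_Cons_one: "i \<in> I \<Longrightarrow> set r \<subseteq> L \<Longrightarrow> factor_proj i ((j, \<one>\<^bsub>M j\<^esub>) # r) = factor_proj i r"
  using factor_l_one factor_proj_closed by simp

lemma factor_proj_cons_reduced:
  assumes i: "i \<in> I" and j: "j \<in> I" and m: "m \<in> carrier (M j)" and w: "w \<in> W"
  shows "factor_proj i (cons_reduced M (j, m) w) = factor_proj i ((j, m) # w)"
proof -
  let ?b = "head_part j w" and ?r = "tail_part j w"
  note d = reduced_word_decomp[OF j w]
  have r: "set ?r \<subseteq> L" using reduced_words_letters[OF d(2)] .
  have unfold: "factor_proj i (if c = \<one>\<^bsub>M j\<^esub> then ?r else (j, c) # ?r) = factor_proj i ((j, c) # ?r)" for c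
    using factor_proj_Cons_one[OF i r, of j] by (cases "c = \<one>\<^bsub>M j\<^esub>") simp_all
  have "factor_proj i (cons_reduced M (j, m) w) = factor_proj i ((j, m \<otimes>\<^bsub>M j\<^esub> ?b) # ?r)"
    using cons_reduced_decomp[OF j m w] unfold by simp
  also have "\<dots> = factor_proj i ((j, m) # (j, ?b) # ?r)"
    using factor_m_assoc[OF j m d(1) factor_proj_closed[OF j r]] by auto
  finally have 1: "factor_proj i (cons_reduced M (j, m) w) = factor_proj i ((j, m) # (j, ?b) # ?r)" .
  have "w = (if ?b = \<one>\<^bsub>M j\<^esub> then ?r else (j, ?b) # ?r)"
    using cons_reduced_not_headed_by[OF d(3), of M] d(4) by simp
  then have 2: "factor_proj i ((j, ?b) # ?r) = factor_proj i w"
    using unfold[of ?b] by metis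
  show ?thesis by (simp only: 1 2 factor_proj_simps(2)[of i j m])
qed

lemma factor_proj_reduce: "i \<in> I \<Longrightarrow> set u \<subseteq> L \<Longrightarrow> factor_proj i (reduce M u) = factor_proj i u"
proof (induction u)
  case (Cons l u)
  obtain j m where l: "l = (j, m)" by (cases l)
  have "factor_proj i (reduce M (l # u)) = factor_proj i (cons_reduced M (j, m) (reduce M u))"
    using l by (simp add: reduce_def)
  also have "\<dots> = factor_proj i ((j, m) # reduce M u)"
    using factor_proj_cons_reduced[OF Cons.prems(1) _ _ reduce_closed] Cons.prems l
      by (simp add: letters_def)
  also have "\<dots> = factor_proj i (l # u)" using Cons l by simp
  finally show ?case .
qed (simp add: reduce_def)

lemma factor_proj_reduced_mult:
  "i \<in> I \<Longrightarrow> u \<in> W \<Longrightarrow> v \<in> W \<Longrightarrow>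
     factor_proj i (reduced_mult M u v) = factor_proj i u \<otimes>\<^bsub>M i\<^esub> factor_proj i v"
proof -
  assume "i \<in> I" "u \<in> W" "v \<in> W"
  moreover from this have "set u \<subseteq> L" "set v \<subseteq> L" by (simp_all add: reduced_words_letters)
  ultimately show ?thesis by (simp add: reduced_mult_def factor_proj_reduce factor_proj_append)
qed

lemma factor_proj_letter_word: "i \<in> I \<Longrightarrow> x \<in> carrier (M i) \<Longrightarrow> factor_proj i (letter_word i x) = x"
  unfolding letter_word_def using factor_r_one by simp

lemma FRE_factor:
  assumes fre: "fin_right_equated W (reduced_mult M)" and i: "i \<in> I"
  shows "FRE (M i)"
proof (rule fin_right_equated_retract[where h = "letter_word i" and p = "factor_proj i",
      OF _ _ _ _ _ _ _ _ fre])
  show "\<forall>x\<in>carrier (M i). \<forall>y\<in>carrier (M i). x \<otimes>\<^bsub>M i\<^esub> y \<in> carrier (M i)"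
    using factor_m_closed[OF i] by blast
  show "\<forall>x\<in>W. factor_proj i x \<in> carrier (M i)"
    using factor_proj_closed[OF i] reduced_words_letters by blast
  show "\<forall>x\<in>W. \<forall>y\<in>W. factor_proj i (reduced_mult M x y) = factor_proj i x \<otimes>\<^bsub>M i\<^esub> factor_proj i y"
    using factor_proj_reduced_mult[OF i] by blast
qed (use reduced_mult_closed reduced_mult_assoc letter_word_closed[OF i] reduced_mult_letter_words[OF i]
    factor_proj_letter_word[OF i] in simp_all)

end

section \<open>Right annihilators of reduced words\<close>

context monoid_family
begin

lemma cons_reduced_inj:
  assumes "not_headed_by i r" and "not_headed_by i r'"
    and "cons_reduced M (i, c) r = cons_reduced M (i, c') r'"
  shows "c = c'" and "r = r'"
proof -
  have "(if c = \<one>\<^bsub>M i\<^esub> then r else (i, c) # r) = (if c' = \<one>\<^bsub>M i\<^esub> then r' else (i, c') # r')"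
    using assms(3) cons_reduced_not_headed_by[OF assms(1), of M c]
      cons_reduced_not_headed_by[OF assms(2), of M c']
    by simp
  then show "c = c'" and "r = r'"
    using assms(1,2) by (auto split: if_splits)
qed

lemma reduced_mult_letter_word_eq_iff:
  assumes i: "i \<in> I" and x: "x \<in> carrier (M i)" and s: "s \<in> W" and t: "t \<in> W"
  shows "reduced_mult M (letter_word i x) s = reduced_mult M (letter_word i x) t \<longleftrightarrow>
    x \<otimes>\<^bsub>M i\<^esub> head_part i s = x \<otimes>\<^bsub>M i\<^esub> head_part i t \<and> tail_part i s = tail_part i t"
proof -
  note ds = reduced_word_decomp[OF i s] and dt = reduced_word_decomp[OF i t]
  have "reduced_mult M (letter_word i x) s = cons_reduced M (i, x \<otimes>\<^bsub>M i\<^esub> head_part i s) (tail_part i s)"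
    using reduced_mult_letter_word[OF i x s] cons_reduced_cons_reduced[OF i x ds(1,2)] ds(4) by simp
  moreover have
    "reduced_mult M (letter_word i x) t = cons_reduced M (i, x \<otimes>\<^bsub>M i\<^esub> head_part i t) (tail_part i t)"
    using reduced_mult_letter_word[OF i x t] cons_reduced_cons_reduced[OF i x dt(1,2)] dt(4) by simp
  ultimately show ?thesis
    using cons_reduced_inj[OF ds(3) dt(3)] by metis
qed

lemma right_annihilator_letter_word:
  assumes i: "i \<in> I" and x: "x \<in> carrier (M i)" and X: "X \<subseteq> carrier (M i) \<times> carrier (M i)"
    and gen: "right_cong_gen (carrier (M i)) (mult (M i)) X =
      right_annihilator (carrier (M i)) (mult (M i)) x"
  shows "right_cong_gen W (reduced_mult M) ((\<lambda>(u, v). (letter_word i u, letter_word i v)) ` X)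
    = right_annihilator W (reduced_mult M) (letter_word i x)"
proof
  let ?X = "(\<lambda>(u, v). (letter_word i u, letter_word i v)) ` X"
  let ?R = "right_cong_gen W (reduced_mult M) ?X"
  have emb: "\<forall>u\<in>carrier (M i). letter_word i u \<in> W" using letter_word_closed[OF i] by blast
  have hom: "\<forall>u\<in>carrier (M i). \<forall>v\<in>carrier (M i).
      letter_word i (u \<otimes>\<^bsub>M i\<^esub> v) = reduced_mult M (letter_word i u) (letter_word i v)"
    using reduced_mult_letter_words[OF i] by simp
  have closed_i: "\<forall>u\<in>carrier (M i). \<forall>v\<in>carrier (M i). u \<otimes>\<^bsub>M i\<^esub> v \<in> carrier (M i)"
    using factor_m_closed[OF i] by blast
  show "?R \<subseteq> right_annihilator W (reduced_mult M) (letter_word i x)"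
    using right_cong_gen_hom_image_subset[OF reduced_mult_closed reduced_mult_assoc emb hom x]
      gen right_cong_gen_upper by metis
  have "?X \<subseteq> W \<times> W" using X emb by auto
  then have rc: "right_congruence W (reduced_mult M) ?R"
    by (rule right_congruence_right_cong_gen[OF reduced_mult_closed])
  show "right_annihilator W (reduced_mult M) (letter_word i x) \<subseteq> ?R"
  proof safe
    fix s t assume "(s, t) \<in> right_annihilator W (reduced_mult M) (letter_word i x)"
    then have st: "s \<in> W" "t \<in> W"
      and eq: "x \<otimes>\<^bsub>M i\<^esub> head_part i s = x \<otimes>\<^bsub>M i\<^esub> head_part i t" "tail_part i s = tail_part i t"
      unfolding right_annihilator_def using reduced_mult_letter_word_eq_iff[OF i x] by auto
    note ds = reduced_word_decomp[OF i st(1)] and dt = reduced_word_decomp[OF i st(2)]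
    have hst: "(head_part i s, head_part i t) \<in> right_cong_gen (carrier (M i)) (mult (M i)) X"
      using gen ds(1) dt(1) eq(1) unfolding right_annihilator_def by auto
    have X_R: "\<forall>(u, v)\<in>X. (letter_word i u, letter_word i v) \<in> ?R"
      using right_cong_gen_upper[of ?X W "reduced_mult M"] by auto
    have "(letter_word i (head_part i s), letter_word i (head_part i t)) \<in> ?R"
      by (rule right_cong_gen_map[OF rc emb emb hom closed_i X X_R hst])
    then have "(reduced_mult M (letter_word i (head_part i s)) (tail_part i s),
        reduced_mult M (letter_word i (head_part i t)) (tail_part i t)) \<in> ?R"
      using right_congruenceD(5)[OF rc] ds(2) eq(2) by simp
    then show "(s, t) \<in> ?R"
      using reduced_mult_letter_word[OF i] ds dt by simp
  qed
qed

lemma right_annihilator_snoc_not_right_invertible: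
  assumes pix: "p @ [(i, x)] \<in> W" and not_inv: "\<forall>b\<in>carrier (M i). x \<otimes>\<^bsub>M i\<^esub> b \<noteq> \<one>\<^bsub>M i\<^esub>"
  shows "right_annihilator W (reduced_mult M) (p @ [(i, x)]) =
    right_annihilator W (reduced_mult M) (letter_word i x)"
proof -
  have p: "p \<in> W" and i: "i \<in> I" and x: "x \<in> carrier (M i)" and p_end: "p = [] \<or> fst (last p) \<noteq> i"
    using pix by (auto simp: reduced_words_append reduced_words_Cons)
  have "reduced_mult M (p @ [(i, x)]) s = p @ reduced_mult M (letter_word i x) s" if s: "s \<in> W" for s
  proof -
    note ds = reduced_word_decomp[OF i s]
    let ?c = "x \<otimes>\<^bsub>M i\<^esub> head_part i s"
    have c: "?c \<in> carrier (M i)" "?c \<noteq> \<one>\<^bsub>M i\<^esub>" using factor_m_closed[OF i x ds(1)] not_inv ds(1) by auto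
    have xs: "cons_reduced M (i, x) s = (i, ?c) # tail_part i s"
      using cons_reduced_decomp[OF i x s] c(2) by simp
    have xsW: "cons_reduced M (i, x) s \<in> W"
      using cons_reduced_closed[OF _ s] i x by (simp add: letters_def)
    then have "p @ (i, ?c) # tail_part i s \<in> W" using xs p p_end by (simp add: reduced_words_append)
    then have "reduce M (p @ cons_reduced M (i, x) s) = p @ cons_reduced M (i, x) s"
      using xs reduce_reduced by simp
    moreover have "reduce M (p @ cons_reduced M (i, x) s) = reduce M (p @ [(i, x)] @ s)"
      using reduce_reduced[OF s] reduce_reduced[OF xsW] by (simp add: reduce_def)
    ultimately show ?thesis using reduced_mult_letter_word[OF i x s] by (simp add: reduced_mult_def)
  qed
  then show ?thesis unfolding right_annihilator_def by auto
qed

lemma fin_gen_right_annihilator_letter_word: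
  assumes "FRE (M i)" and i: "i \<in> I" and x: "x \<in> carrier (M i)"
  shows "fin_gen_right_annihilator W (reduced_mult M) (letter_word i x)"
proof -
  obtain X where X: "finite X" "X \<subseteq> carrier (M i) \<times> carrier (M i)"
    "right_cong_gen (carrier (M i)) (mult (M i)) X = right_annihilator (carrier (M i)) (mult (M i)) x"
    using assms(1) x unfolding fin_right_equated_def by blast
  show ?thesis
    unfolding fin_gen_right_annihilator_def
  proof (intro exI conjI)
    show "finite ((\<lambda>(u, v). (letter_word i u, letter_word i v)) ` X)" using X(1) by simp
    show "(\<lambda>(u, v). (letter_word i u, letter_word i v)) ` X \<subseteq> W \<times> W"
      using X(2) letter_word_closed[OF i] by auto
  qed (rule right_annihilator_letter_word[OF i x X(2,3)])
qed

lemma fin_gen_right_annihilator_snoc: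
  assumes fre: "FRE (M i)" and pix: "p @ [(i, x)] \<in> W"
    and p: "fin_gen_right_annihilator W (reduced_mult M) p"
  shows "fin_gen_right_annihilator W (reduced_mult M) (p @ [(i, x)])"
proof -
  have pW: "p \<in> W" and i: "i \<in> I" and x: "x \<in> carrier (M i)" "x \<noteq> \<one>\<^bsub>M i\<^esub>"
    using pix by (auto simp: reduced_words_append reduced_words_Cons)
  have fin_x: "fin_gen_right_annihilator W (reduced_mult M) (letter_word i x)"
    by (rule fin_gen_right_annihilator_letter_word[OF fre i x(1)])
  show ?thesis
  proof (cases "\<exists>b\<in>carrier (M i). x \<otimes>\<^bsub>M i\<^esub> b = \<one>\<^bsub>M i\<^esub>")
    case True
    then obtain b where b: "b \<in> carrier (M i)" "x \<otimes>\<^bsub>M i\<^esub> b = \<one>\<^bsub>M i\<^esub>" by blast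
    have xW: "letter_word i x \<in> W" and bW: "letter_word i b \<in> W"
      using letter_word_closed[OF i] x(1) b(1) by auto
    have "reduced_mult M (letter_word i x) (letter_word i b) = []"
      using reduced_mult_letter_words[OF i x(1) b(1)] b(2) by (simp add: letter_word_def)
    then have right_inv: "\<forall>y\<in>W. reduced_mult M (letter_word i x) (reduced_mult M (letter_word i b) y) = y"
      using reduced_mult_assoc xW bW reduced_mult_Nil(1) by metis
    have "reduced_mult M p (letter_word i x) = p @ [(i, x)]"
      using reduce_reduced[OF pix] x(2) by (simp add: reduced_mult_def letter_word_def)
    then show ?thesis
      using fin_gen_right_annihilator_mult_right_invertible[OF reduced_mult_closed reduced_mult_assoc
          pW xW bW right_inv p fin_x] by simp
  next
    case False
    then show ?thesis
      using fin_x right_annihilator_snoc_not_right_invertible[OF pix]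
      unfolding fin_gen_right_annihilator_def by simp
  qed
qed

lemma fin_right_equated_reduced_words:
  assumes "\<forall>i\<in>I. FRE (M i)"
  shows "fin_right_equated W (reduced_mult M)"
  unfolding fin_right_equated_iff
proof
  fix a assume "a \<in> W"
  then show "fin_gen_right_annihilator W (reduced_mult M) a"
  proof (induction a rule: rev_induct)
    case Nil
    have "right_annihilator W (reduced_mult M) [] = Id_on W"
      unfolding right_annihilator_def Id_on_def using reduced_mult_Nil by auto
    then show ?case
      using right_cong_gen_empty[of W "reduced_mult M"] reduced_mult_closed
      unfolding fin_gen_right_annihilator_def by (metis finite.emptyI empty_subsetI)
  next
    case (snoc l p)
    obtain i x where l: "l = (i, x)" by (cases l)
    then have "i \<in> I" "p \<in> W" using snoc.prems by (auto simp: reduced_words_append reduced_words_Cons)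
    then show ?case
      using fin_gen_right_annihilator_snoc assms snoc l by blast
  qed
qed

end

theorem mainTheorem6:
  fixes I :: "'i set" and M :: "'i \<Rightarrow> ('a, 'b) monoid_scheme"
  assumes "\<And>i. i \<in> I \<Longrightarrow> monoid (M i)"
  shows "FRE (monoid_free_prod I M) \<longleftrightarrow> (\<forall>i \<in> I. FRE (M i))"
proof -
  interpret monoid_family I M by (simp add: monoid_family_def assms)
  show ?thesis
  proof (cases "I = {}")
    case True
    then have "sg_free_prod_carrier I M = {}"
      by (auto simp: sg_free_prod_carrier_iff letters_def neq_Nil_conv)
    then have "carrier (monoid_free_prod I M) = {}"
      by (simp add: carrier_monoid_free_prod)
    then show ?thesis using True unfolding fin_right_equated_def by simp
  next
    case False
    then obtain i where "i \<in> I" by blast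
    then show ?thesis
      using FRE_monoid_free_prod_iff FRE_factor fin_right_equated_reduced_words by blast
  qed
qed

end
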